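(* Let $X$ be a metric space, $\mathcal M=\{M_1,\dots,M_n\}\subset\mathcal P^f_{\mathrm{Cl}}(X)$, $\Sigma(\mathcal M)\ne\emptyset$ and $d\in\Omega(\mathcal M)$. Then $K_d\in\Sigma_d(\mathcal M)$ and $K\subset K_d$ for every $K\in\Sigma_d(\mathcal M)$; i.e. $K_d$ is the greatest element of $\Sigma_d(\mathcal M)$ with respect to inclusion.
   Context: For a metric space $X$, $p\in X$, $A\subset X$: $|p\,A|=\inf_{a\in A}|p\,a|$ ($=\infty$ if $A=\emptyset$); for $0\le r<\infty$, $B_r(A)=\{p:|p\,A|\le r\}$. For nonempty $A,B$, $d_H(A,B)=\max\{\sup_{a\in A}|a\,B|,\sup_{b\in B}|b\,A|\}\in[0,\infty]$. $\mathcal P_{\mathrm{Cl}}(X)$ is the set of nonempty closed subsets of $X$ with $d_H$. A finiteness class of $\mathcal P_{\mathrm{Cl}}(X)$ is an equivalence class of the relation $A\sim B\iff d_H(A,B)<\infty$; $\mathcal P^f_{\mathrm{Cl}}(X)$ denotes a fixed finiteness class. For finite $\mathcal M=\{M_1,\dots,M_n\}\subset\mathcal P^f_{\mathrm{Cl}}(X)$, set $S_{\mathcal M}(Y)=\sum_{i=1}^n d_H(Y,M_i)$ for $Y\in\mathcal P^f_{\mathrm{Cl}}(X)$; $\Sigma(\mathcal M)$ is the set of all minimizers of $S_{\mathcal M}$ over $\mathcal P^f_{\mathrm{Cl}}(X)$. For $K\in\Sigma(\mathcal M)$, $d(K)=(d_H(K,M_1),\dots,d_H(K,M_n))$; $\Omega(\mathcal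 M)=\{d(K):K\in\Sigma(\mathcal M)\}$; for $d=(d_1,\dots,d_n)\in\Omega(\mathcal M)$, $\Sigma_d(\mathcal M)=\{K\in\Sigma(\mathcal M):d(K)=d\}$, partially ordered by inclusion; and $K_d=\bigcap_{i=1}^n B_{d_i}(M_i)$. *)

theory Defs
  imports "HOL-Analysis.Analysis"
begin

definition pt_set_dist :: "'a::metric_space \<Rightarrow> 'a set \<Rightarrow> ereal" where
  "pt_set_dist p A = (if A = {} then \<infinity> else ereal (INF a\<in>A. dist p a))"

definition nbhd :: "real \<Rightarrow> 'a::metric_space set \<Rightarrow> 'a set" where
  "nbhd r A = {p. pt_set_dist p A \<le> ereal r}"

definition hdist :: "'a::metric_space set \<Rightarrow> 'a set \<Rightarrow> ereal" where
  "hdist A B = max (SUP a\<in>A. pt_set_dist a B) (SUP b\<in>B. pt_set_dist b A)"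

definition PCl :: "'a::metric_space set set" where
  "PCl = {A. closed A \<and> A \<noteq> {}}"

definition finiteness_class :: "'a::metric_space set set \<Rightarrow> bool" where
  "finiteness_class F \<longleftrightarrow> (\<exists>C\<in>PCl. F = {A\<in>PCl. hdist A C < \<infinity>})"

definition SM :: "nat \<Rightarrow> (nat \<Rightarrow> 'a::metric_space set) \<Rightarrow> 'a set \<Rightarrow> ereal" where
  "SM n M Y = (\<Sum>i<n. hdist Y (M i))"

definition Sigma_min :: "'a::metric_space set set \<Rightarrow> nat \<Rightarrow> (nat \<Rightarrow> 'a set) \<Rightarrow> 'a set set" where
  "Sigma_min F n M = {K\<in>F. \<forall>Y\<in>F. SM n M K \<le> SM n M Y}"

text \<open>Omega(M): distance vectors d(K) of minimizers (entries beyond n are irrelevant).\<close>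
definition Omega :: "'a::metric_space set set \<Rightarrow> nat \<Rightarrow> (nat \<Rightarrow> 'a set) \<Rightarrow> (nat \<Rightarrow> real) set" where
  "Omega F n M = {d. \<exists>K\<in>Sigma_min F n M. \<forall>i<n. hdist K (M i) = ereal (d i)}"

definition Sigma_d :: "'a::metric_space set set \<Rightarrow> nat \<Rightarrow> (nat \<Rightarrow> 'a set) \<Rightarrow> (nat \<Rightarrow> real) \<Rightarrow> 'a set set" where
  "Sigma_d F n M d = {K\<in>Sigma_min F n M. \<forall>i<n. hdist K (M i) = ereal (d i)}"

definition K_d :: "nat \<Rightarrow> (nat \<Rightarrow> 'a::metric_space set) \<Rightarrow> (nat \<Rightarrow> real) \<Rightarrow> 'a set" where
  "K_d n M d = (\<Inter>i<n. nbhd (d i) (M i))"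

end

theory Submission
  imports Defs
begin

text \<open>
  Every \<open>K \<in> \<Sigma>\<^sub>d(\<M>)\<close> lies in each \<open>B\<^sub>d\<^sub>i(M\<^sub>i)\<close>, hence in \<open>K\<^sub>d\<close>.
  Conversely \<open>K\<^sub>d\<close> is a closed set containing such a \<open>K\<close> and contained in every
  \<open>B\<^sub>d\<^sub>i(M\<^sub>i)\<close>; enlarging \<open>K\<close> can only shrink the distances from points of \<open>M\<^sub>i\<close>,
  so \<open>d\<^sub>H(K\<^sub>d, M\<^sub>i) \<le> d\<^sub>i\<close>. Thus \<open>K\<^sub>d\<close> lies in the finiteness class and
  \<open>S\<^sub>\<M>(K\<^sub>d) \<le> S\<^sub>\<M>(K)\<close>; minimality of \<open>K\<close> forces equality in the sum, and since each
  term is at most \<open>d\<^sub>i\<close>, every term equals \<open>d\<^sub>i\<close>.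
\<close>

lemma pt_set_dist_eq_infdist: "A \<noteq> {} \<Longrightarrow> pt_set_dist p A = ereal (infdist p A)"
  by (simp add: pt_set_dist_def infdist_notempty)

lemma nbhd_eq_infdist_le: "A \<noteq> {} \<Longrightarrow> nbhd r A = {p. infdist p A \<le> r}"
  by (simp add: nbhd_def pt_set_dist_eq_infdist)

lemma closed_nbhd: "closed (nbhd r A)"
proof (cases "A = {}")
  case True
  then show ?thesis by (simp add: nbhd_def pt_set_dist_def)
next
  case False
  have "closed {p. infdist p A \<le> r}"
    by (intro closed_Collect_le continuous_on_infdist continuous_on_id continuous_on_const)
  with False show ?thesis by (simp add: nbhd_eq_infdist_le)
qed

lemma hdist_nonneg:
  assumes "A \<noteq> {}" "B \<noteq> {}"
  shows "0 \<le> hdist A B"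
proof -
  obtain a where a: "a \<in> A" using assms(1) by blast
  have "0 \<le> pt_set_dist a B" using assms(2) by (simp add: pt_set_dist_eq_infdist infdist_nonneg)
  also have "\<dots> \<le> (SUP a\<in>A. pt_set_dist a B)" using a by (rule SUP_upper)
  also have "\<dots> \<le> hdist A B" by (simp add: hdist_def)
  finally show ?thesis .
qed

lemma hdist_le_iff:
  assumes "A \<noteq> {}" "B \<noteq> {}"
  shows "hdist A B \<le> ereal r \<longleftrightarrow> (\<forall>a\<in>A. infdist a B \<le> r) \<and> (\<forall>b\<in>B. infdist b A \<le> r)"
  using assms by (simp add: hdist_def pt_set_dist_eq_infdist SUP_le_iff)

lemma infdist_le_add:
  assumes "B \<noteq> {}" "infdist a B \<le> r" "\<forall>b\<in>B. infdist b C \<le> s"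
  shows "infdist a C \<le> r + s"
proof -
  have "\<forall>b\<in>B. infdist a C - s \<le> dist a b"
    using assms(3) infdist_triangle[of a C] by (smt (verit) dist_commute)
  then have "infdist a C - s \<le> infdist a B"
    using assms(1) by (simp add: infdist_notempty cINF_greatest)
  with assms(2) show ?thesis by simp
qed

lemma hdist_triangle_le:
  assumes "A \<noteq> {}" "B \<noteq> {}" "C \<noteq> {}"
    and AB: "hdist A B \<le> ereal r" and BC: "hdist B C \<le> ereal s"
  shows "hdist A C \<le> ereal (r + s)"
proof -
  have "\<forall>a\<in>A. infdist a B \<le> r" "\<forall>b\<in>B. infdist b A \<le> r"
    using AB hdist_le_iff[OF assms(1,2)] by blast+
  moreover have "\<forall>b\<in>B. infdist b C \<le> s" "\<forall>c\<in>C. infdist c B \<le> s"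
    using BC hdist_le_iff[OF assms(2,3)] by blast+
  ultimately have "\<forall>a\<in>A. infdist a C \<le> r + s" "\<forall>c\<in>C. infdist c A \<le> s + r"
    using infdist_le_add[OF assms(2)] by blast+
  then show ?thesis using hdist_le_iff[OF assms(1,3)] by (simp add: add.commute)
qed

lemma finiteness_class_nonempty: "finiteness_class F \<Longrightarrow> A \<in> F \<Longrightarrow> A \<noteq> {}"
  by (auto simp: finiteness_class_def PCl_def)

lemma finiteness_class_memI:
  assumes F: "finiteness_class F" and "B \<in> F" "A \<in> PCl" and AB: "hdist A B \<le> ereal r"
  shows "A \<in> F"
proof -
  obtain C where C: "C \<in> PCl" and F_eq: "F = {A\<in>PCl. hdist A C < \<infinity>}"
    using F unfolding finiteness_class_def by blast
  obtain s where "hdist B C \<le> ereal s"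
    using \<open>B \<in> F\<close> F_eq by (cases "hdist B C") auto
  moreover have "A \<noteq> {}" "B \<noteq> {}" "C \<noteq> {}"
    using \<open>A \<in> PCl\<close> \<open>B \<in> F\<close> C F_eq by (auto simp: PCl_def)
  ultimately have "hdist A C \<le> ereal (r + s)"
    using hdist_triangle_le AB by blast
  then have "hdist A C < \<infinity>" by (rule le_less_trans) simp
  with \<open>A \<in> PCl\<close> show ?thesis by (simp add: F_eq)
qed

lemma hdist_le_imp_subset_nbhd:
  assumes "B \<noteq> {}" "hdist A B \<le> ereal r"
  shows "A \<subseteq> nbhd r B"
proof (cases "A = {}")
  case False
  then have "\<forall>a\<in>A. infdist a B \<le> r" using assms hdist_le_iff by blast
  then show ?thesis by (auto simp: nbhd_eq_infdist_le[OF assms(1)])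
qed simp

lemma hdist_le_of_subset_nbhd:
  assumes "K \<noteq> {}" "A \<noteq> {}" "K \<subseteq> L" "L \<subseteq> nbhd r A" and KA: "hdist K A \<le> ereal r"
  shows "hdist L A \<le> ereal r"
proof -
  have L: "L \<noteq> {}" using assms(1,3) by blast
  have "\<forall>a\<in>L. infdist a A \<le> r" using assms(4) by (auto simp: nbhd_eq_infdist_le[OF assms(2)])
  moreover have "\<forall>b\<in>A. infdist b L \<le> r"
  proof
    fix b assume "b \<in> A"
    have "infdist b L \<le> infdist b K" using infdist_mono[OF assms(3,1)] .
    also have "\<dots> \<le> r" using KA hdist_le_iff[OF assms(1,2)] \<open>b \<in> A\<close> by blast
    finally show "infdist b L \<le> r" .
  qed
  ultimately show ?thesis using hdist_le_iff[OF L assms(2)] by blast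
qed

lemma ereal_sum_ge_imp_eq:
  assumes "finite I" "\<forall>i\<in>I. 0 \<le> x i" "\<forall>i\<in>I. x i \<le> ereal (y i)"
    and sum_ge: "(\<Sum>i\<in>I. ereal (y i)) \<le> (\<Sum>i\<in>I. x i)"
  shows "\<forall>i\<in>I. x i = ereal (y i)"
proof -
  define x' where "x' i = real_of_ereal (x i)" for i
  have x: "x i = ereal (x' i)" if "i \<in> I" for i
    using assms(2,3) that unfolding x'_def by (cases "x i") auto
  then have le: "\<forall>i\<in>I. x' i \<le> y i" "(\<Sum>i\<in>I. y i) \<le> (\<Sum>i\<in>I. x' i)"
    using sum_ge assms(3) by (simp_all cong: sum.cong)
  then have sum_eq: "(\<Sum>i\<in>I. x' i) = (\<Sum>i\<in>I. y i)"
    using sum_mono[of I x' y] by simp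
  have "x' i = y i" if "i \<in> I" for i
    using sum_mono_inv[OF sum_eq le(1)[rule_format] that assms(1)] .
  with x show ?thesis by simp
qed

lemma Sigma_d_subset_K_d:
  assumes "K \<in> Sigma_d F n M d" "\<forall>i<n. M i \<noteq> {}"
  shows "K \<subseteq> K_d n M d"
  unfolding K_d_def
proof (rule INT_greatest)
  fix i assume "i \<in> {..<n}"
  with assms show "K \<subseteq> nbhd (d i) (M i)"
    by (intro hdist_le_imp_subset_nbhd) (auto simp: Sigma_d_def)
qed

lemma closed_K_d: "closed (K_d n M d)"
  by (auto simp: K_d_def intro: closed_nbhd)

lemma hdist_K_d_le:
  assumes "K \<in> Sigma_d F n M d" "K \<noteq> {}" "\<forall>i<n. M i \<noteq> {}" "i < n"
  shows "hdist (K_d n M d) (M i) \<le> ereal (d i)"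
proof (rule hdist_le_of_subset_nbhd)
  show "K \<subseteq> K_d n M d" using Sigma_d_subset_K_d assms(1,3) .
  show "K_d n M d \<subseteq> nbhd (d i) (M i)" using assms(4) by (auto simp: K_d_def)
  show "hdist K (M i) \<le> ereal (d i)" using assms(1,4) by (simp add: Sigma_d_def)
qed (use assms in auto)

lemma Sigma_d_memI:
  assumes K: "K \<in> Sigma_d F n M d" and "L \<in> F" "L \<noteq> {}" "\<forall>i<n. M i \<noteq> {}"
    and L_le: "\<forall>i<n. hdist L (M i) \<le> ereal (d i)"
  shows "L \<in> Sigma_d F n M d"
proof -
  have K_min: "\<forall>Y\<in>F. SM n M K \<le> SM n M Y"
    using K by (simp add: Sigma_d_def Sigma_min_def)
  have SM_K: "(\<Sum>i<n. ereal (d i)) = SM n M K"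
    using K by (simp add: Sigma_d_def SM_def)
  have "\<forall>i\<in>{..<n}. hdist L (M i) = ereal (d i)"
  proof (rule ereal_sum_ge_imp_eq)
    show "\<forall>i\<in>{..<n}. 0 \<le> hdist L (M i)" using hdist_nonneg[OF assms(3)] assms(4) by simp
    show "\<forall>i\<in>{..<n}. hdist L (M i) \<le> ereal (d i)" using L_le by simp
    have "(\<Sum>i<n. ereal (d i)) \<le> SM n M L" using SM_K K_min \<open>L \<in> F\<close> by simp
    then show "(\<Sum>i<n. ereal (d i)) \<le> (\<Sum>i<n. hdist L (M i))" by (simp only: SM_def)
  qed simp
  then have L_eq: "\<forall>i<n. hdist L (M i) = ereal (d i)" by simp
  then have "SM n M L = (\<Sum>i<n. ereal (d i))" by (simp add: SM_def)
  then have "SM n M L = SM n M K" using SM_K by simp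
  with K_min have "L \<in> Sigma_min F n M" using \<open>L \<in> F\<close> by (simp add: Sigma_min_def)
  with L_eq show ?thesis by (simp add: Sigma_d_def)
qed

theorem mainTheorem11:
  fixes F :: "'a::metric_space set set" and n :: nat
    and M :: "nat \<Rightarrow> 'a set" and d :: "nat \<Rightarrow> real"
  assumes "finiteness_class F"
    and "n \<ge> 1"
    and "\<forall>i<n. M i \<in> F"
    and "Sigma_min F n M \<noteq> {}"
    and "d \<in> Omega F n M"
  shows "K_d n M d \<in> Sigma_d F n M d \<and> (\<forall>K\<in>Sigma_d F n M d. K \<subseteq> K_d n M d)"
proof -
  have M: "\<forall>i<n. M i \<noteq> {}"
    using assms(1,3) finiteness_class_nonempty by blast
  have maximal: "\<forall>K\<in>Sigma_d F n M d. K \<subseteq> K_d n M d"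
    using Sigma_d_subset_K_d M by blast
  obtain K where K: "K \<in> Sigma_d F n M d"
    using assms(5) by (auto simp: Omega_def Sigma_d_def)
  then have "K \<noteq> {}"
    using finiteness_class_nonempty[OF assms(1)] by (simp add: Sigma_d_def Sigma_min_def)
  then have K_d_ne: "K_d n M d \<noteq> {}" using maximal K by blast
  have K_d_le: "\<forall>i<n. hdist (K_d n M d) (M i) \<le> ereal (d i)"
    using hdist_K_d_le[OF K \<open>K \<noteq> {}\<close> M] by blast
  have "K_d n M d \<in> PCl" using K_d_ne closed_K_d by (simp add: PCl_def)
  moreover have "M 0 \<in> F" "hdist (K_d n M d) (M 0) \<le> ereal (d 0)"
    using assms(2,3) K_d_le by simp_all
  ultimately have "K_d n M d \<in> F"
    using finiteness_class_memI[OF assms(1)] by blast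
  then show ?thesis
    using Sigma_d_memI[OF K _ K_d_ne M K_d_le] maximal by blast
qed

end
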